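(* Let $d,s\in\mathbb{N}_{\ge1}$, let $\boldsymbol\alpha\in\mathbb{N}_{\ge0}^d$ with $\sum_{i=1}^d\alpha_i=\bar\alpha$, and write $a:=\lceil\log_2\bar\alpha\rceil$. For any $0<\epsilon\le\frac{3^{a}-1}{3^{a-1}-1}$ (read as $+\infty$ when $3^{a-1}-1=0$), there exists a ReLU FNN function $f^{(mnm)}_{FF}:\mathbb{R}^d\to\mathbb{R}$ with width $21\cdot2^{a-1}$, depth $C\ln\frac{3^{a}-1}{2\epsilon}$ and weight bound $C$, where $C$ is a constant independent of $\epsilon$, such that for all $\boldsymbol x\in[0,1]^d$, $$|f^{(mnm)}_{FF}(\boldsymbol x)-x_1^{\alpha_1}x_2^{\alpha_2}\cdots x_d^{\alpha_d}|\le\epsilon.$$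
   Context: ReLU FNN of depth $L$, width $W$: $f_0=x$, $f_l=\sigma_R(W_lf_{l-1}+b_l)$ ($1\le l\le L-1$), $f=W_Lf_{L-1}+b_L$ with hidden layers of width $W$, $\sigma_R(x)=\max\{x,0\}$; the weight bound is the maximum absolute value of all weights and biases. *)

theory Defs
  imports Complex_Main
begin

text \<open>A network is a list of affine layers (W, b);
 W is given as a list of rows (rows = output dimension), b as a list.
 A network with L layers has depth L: f_0 = x, f_l = relu(W_l f_(l-1) + b_l)
 for 1 <= l <= L-1, and the output is W_L f_(L-1) + b_L (no activation).\<close>

definition relu :: "real \<Rightarrow> real" where
  "relu t = max t 0"

definition affine :: "real list list \<Rightarrow> real list \<Rightarrow> real list \<Rightarrow> real list" where
  "affine W b x = map2 (\<lambda>row bi. (\<Sum>j<length x. row ! j * x ! j) + bi) W b"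

fun net_eval :: "(real list list \<times> real list) list \<Rightarrow> real list \<Rightarrow> real list" where
  "net_eval [] x = x"
| "net_eval [(W, b)] x = affine W b x"
| "net_eval ((W, b) # rest) x = net_eval rest (map relu (affine W b x))"

definition layer_ok :: "nat \<Rightarrow> nat \<Rightarrow> real list list \<times> real list \<Rightarrow> bool" where
  "layer_ok n m Wb \<longleftrightarrow> length (fst Wb) = m \<and> length (snd Wb) = m
      \<and> (\<forall>row \<in> set (fst Wb). length row = n)"

definition relu_fnn :: "nat \<Rightarrow> nat \<Rightarrow> nat \<Rightarrow> real \<Rightarrow> (real list list \<times> real list) list \<Rightarrow> bool" where
  "relu_fnn d w L B N \<longleftrightarrow> L \<ge> 1 \<and> length N = L
     \<and> (\<forall>l<L. layer_ok (if l = 0 then d else w) (if l = L - 1 then 1 else w) (N ! l))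
     \<and> (\<forall>l<L. (\<forall>row \<in> set (fst (N ! l)). \<forall>c \<in> set row. \<bar>c\<bar> \<le> B)
              \<and> (\<forall>c \<in> set (snd (N ! l)). \<bar>c\<bar> \<le> B))"

end

theory Submission
  imports Defs
begin

text \<open>Write the monomial as a product z_0 z_1 ... z_(n-1) of n = |\<alpha>| coordinates in [0, 1] and
  multiply them in one at a time. A product p q is recovered from squares by polarization,
  p q = 2 ((p + q)/2)^2 - p^2/2 - q^2/2, and each square is replaced by Yarotsky's sawtooth
  approximation u - (\<Sum>t = 1..m. g^t u / 4^t) of u^2, where g is the tent map; it is exact up to
  4^-(m+1) and costs m ReLU layers of constant width. Clipping every intermediate product to
  [0, 1] keeps the arguments of g in range and makes the errors of the n - 1 multiplications
  add up, giving error (n - 1) / 4^m, so m = \<lceil>ln (1/\<epsilon>)\<rceil> + n layers per block suffice.\<close>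

section \<open>Sparse ReLU layers\<close>

lemma relu_of_nonneg: "0 \<le> t \<Longrightarrow> relu t = t"
  by (simp add: relu_def)

fun hidden_eval :: "(real list list \<times> real list) list \<Rightarrow> real list \<Rightarrow> real list" where
  "hidden_eval [] x = x"
| "hidden_eval ((W, b) # Ls) x = hidden_eval Ls (map relu (affine W b x))"

lemma hidden_eval_append: "hidden_eval (Ls @ Ms) x = hidden_eval Ms (hidden_eval Ls x)"
  by (induction Ls arbitrary: x) auto

lemma net_eval_append_last: "net_eval (Ls @ [L]) x = affine (fst L) (snd L) (hidden_eval Ls x)"
proof (induction Ls arbitrary: x)
  case (Cons L' Ls)
  obtain W b where "L' = (W, b)" by fastforce
  moreover obtain M Ms where "Ls @ [L] = M # Ms" by (cases "Ls @ [L]") auto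
  ultimately show ?case using Cons by simp
qed (cases L, simp)

text \<open>A sparse row is a list of (column, weight) pairs. sparse_dot ignores columns outside the
  input, so that it agrees with the dense layer without a range hypothesis on the rows.\<close>

definition sparse_coef :: "(nat \<times> real) list \<Rightarrow> nat \<Rightarrow> real" where
  "sparse_coef r j = (\<Sum>(k, a)\<leftarrow>r. if k = j then a else 0)"

definition sparse_dot :: "(nat \<times> real) list \<Rightarrow> real list \<Rightarrow> real" where
  "sparse_dot r x = (\<Sum>(k, a)\<leftarrow>r. if k < length x then a * x ! k else 0)"

definition sparse_layer ::
  "nat \<Rightarrow> nat \<Rightarrow> (nat \<Rightarrow> (nat \<times> real) list) \<Rightarrow> (nat \<Rightarrow> real) \<Rightarrow> real list list \<times> real list" where
  "sparse_layer n m R B = (map (\<lambda>i. map (sparse_coef (R i)) [0..<n]) [0..<m], map B [0..<m])"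

lemma sum_sparse_coef: "(\<Sum>j<length x. sparse_coef r j * x ! j) = sparse_dot r x"
proof (induction r)
  case (Cons ka r)
  obtain k a where ka: "ka = (k, a)" by fastforce
  have "sparse_coef (ka # r) j * x ! j = (if k = j then a * x ! j else 0) + sparse_coef r j * x ! j" for j
    by (simp add: sparse_coef_def ka distrib_right)
  then have "(\<Sum>j<length x. sparse_coef (ka # r) j * x ! j)
      = (if k < length x then a * x ! k else 0) + (\<Sum>j<length x. sparse_coef r j * x ! j)"
    by (simp add: sum.distrib)
  then show ?case using Cons by (simp add: sparse_dot_def ka)
qed (simp add: sparse_coef_def sparse_dot_def)

lemma affine_sparse_layer:
  assumes "length x = n"
  shows "affine (fst (sparse_layer n m R B)) (snd (sparse_layer n m R B)) x
       = map (\<lambda>i. sparse_dot (R i) x + B i) [0..<m]"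
proof (rule nth_equalityI)
  fix i assume "i < length (affine (fst (sparse_layer n m R B)) (snd (sparse_layer n m R B)) x)"
  then have "i < m" by (simp add: affine_def sparse_layer_def)
  moreover have "(\<Sum>j<n. map (sparse_coef (R i)) [0..<n] ! j * x ! j) = (\<Sum>j<n. sparse_coef (R i) j * x ! j)"
    by (rule sum.cong) auto
  ultimately show "affine (fst (sparse_layer n m R B)) (snd (sparse_layer n m R B)) x ! i
      = map (\<lambda>i. sparse_dot (R i) x + B i) [0..<m] ! i"
    using assms sum_sparse_coef[where x = x and r = "R i"] by (simp add: affine_def sparse_layer_def)
qed (simp add: affine_def sparse_layer_def)

lemma hidden_eval_sparse_layer:
  assumes "length x = n"
  shows "hidden_eval (sparse_layer n m R B # Ls) x
       = hidden_eval Ls (map (\<lambda>i. relu (sparse_dot (R i) x + B i)) [0..<m])"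
  using affine_sparse_layer[OF assms, of m R B] by (simp add: sparse_layer_def o_def)

lemma abs_sparse_coef_le: "\<bar>sparse_coef r j\<bar> \<le> (\<Sum>(k, a)\<leftarrow>r. \<bar>a\<bar>)"
proof (induction r)
  case (Cons ka r)
  obtain k a where "ka = (k, a)" by fastforce
  then show ?case using Cons abs_triangle_ineq[of "if k = j then a else 0" "sparse_coef r j"]
    by (auto simp: sparse_coef_def)
qed (simp add: sparse_coef_def)

definition weights_bounded :: "real list list \<times> real list \<Rightarrow> real \<Rightarrow> bool" where
  "weights_bounded L C \<longleftrightarrow> (\<forall>row \<in> set (fst L). \<forall>c \<in> set row. \<bar>c\<bar> \<le> C) \<and> (\<forall>c \<in> set (snd L). \<bar>c\<bar> \<le> C)"

lemma layer_ok_sparse_layer: "layer_ok n m (sparse_layer n m R B)"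
  by (auto simp: layer_ok_def sparse_layer_def)

lemma weights_bounded_sparse_layer:
  assumes "\<And>i. i < m \<Longrightarrow> (\<Sum>(k, a)\<leftarrow>R i. \<bar>a\<bar>) \<le> C" "\<And>i. i < m \<Longrightarrow> \<bar>B i\<bar> \<le> C"
  shows "weights_bounded (sparse_layer n m R B) C"
  using assms abs_sparse_coef_le order_trans by (fastforce simp: weights_bounded_def sparse_layer_def)

lemma relu_fnn_intro:
  assumes "layer_ok d w F" "weights_bounded F C"
    and "\<And>M. M \<in> set Ms \<Longrightarrow> layer_ok w w M \<and> weights_bounded M C"
    and "layer_ok w 1 G" "weights_bounded G C"
  shows "relu_fnn d w (length Ms + 2) C (F # Ms @ [G])"
proof -
  have "layer_ok (if l = 0 then d else w) (if l = length Ms + 1 then 1 else w) ((F # Ms @ [G]) ! l)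
      \<and> weights_bounded ((F # Ms @ [G]) ! l) C" if "l < length Ms + 2" for l
  proof (cases l)
    case (Suc l')
    with that have "l' < length Ms \<or> l' = length Ms" by linarith
    then show ?thesis using assms Suc by (auto simp: nth_append)
  qed (use assms in simp)
  then show ?thesis unfolding relu_fnn_def weights_bounded_def by auto
qed

lemma relu_fnn_mono: "relu_fnn d w L B N \<Longrightarrow> B \<le> C \<Longrightarrow> relu_fnn d w L C N"
  unfolding relu_fnn_def by (meson order_trans)

section \<open>Sawtooth approximation of the square\<close>

definition tent :: "real \<Rightarrow> real" where
  "tent y = 2 * relu y - 4 * relu (y - 1/2)"

lemma tent_eq: "0 \<le> y \<Longrightarrow> tent y = (if y \<le> 1/2 then 2 * y else 2 - 2 * y)"
  by (auto simp: tent_def relu_def)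

lemma funpow_tent_in_unit: "0 \<le> y \<Longrightarrow> y \<le> 1 \<Longrightarrow> 0 \<le> (tent ^^ s) y \<and> (tent ^^ s) y \<le> 1"
  by (induction s) (auto simp: tent_eq)

text \<open>Yarotsky's sawtooth expansion of the square: for the tent map g and y in [0, 1],
  y - y^2 = (g y + (g y - (g y)^2)) / 4.\<close>

lemma square_sawtooth_expansion:
  assumes "0 \<le> u" "u \<le> 1"
  shows "u - (\<Sum>t\<in>{1..s}. (tent ^^ t) u / 4 ^ t)
       = u\<^sup>2 + ((tent ^^ s) u - ((tent ^^ s) u)\<^sup>2) / 4 ^ s"
proof (induction s)
  case (Suc s)
  define y where "y = (tent ^^ s) u"
  have "0 \<le> y" "y \<le> 1" using funpow_tent_in_unit[OF assms] by (auto simp: y_def)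
  then have "y - y\<^sup>2 = (tent y + (tent y - (tent y)\<^sup>2)) / 4"
    by (auto simp: tent_eq power2_eq_square field_simps)
  with Suc show ?case by (simp add: y_def field_simps)
qed simp

lemma square_sawtooth_bounds:
  assumes "0 \<le> u" "u \<le> 1"
  shows "u\<^sup>2 \<le> u - (\<Sum>t\<in>{1..s}. (tent ^^ t) u / 4 ^ t)"
    and "u - (\<Sum>t\<in>{1..s}. (tent ^^ t) u / 4 ^ t) \<le> u\<^sup>2 + 1 / 4 ^ Suc s"
proof -
  define y where "y = (tent ^^ s) u"
  have "0 \<le> y" "y \<le> 1" using funpow_tent_in_unit[OF assms] by (auto simp: y_def)
  then have "0 \<le> y - y\<^sup>2" "y - y\<^sup>2 \<le> 1/4"
    using mult_left_le[of y y] zero_le_power2[of "y - 1/2"] by (auto simp: power2_eq_square algebra_simps)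
  then have "0 \<le> (y - y\<^sup>2) / 4 ^ s" "(y - y\<^sup>2) / 4 ^ s \<le> 1 / 4 ^ Suc s"
    using divide_right_mono[of "y - y\<^sup>2" "1/4" "4 ^ s"] by auto
  then show "u\<^sup>2 \<le> u - (\<Sum>t\<in>{1..s}. (tent ^^ t) u / 4 ^ t)"
    and "u - (\<Sum>t\<in>{1..s}. (tent ^^ t) u / 4 ^ t) \<le> u\<^sup>2 + 1 / 4 ^ Suc s"
    unfolding square_sawtooth_expansion[OF assms] y_def[symmetric] by auto
qed

section \<open>Multiplication blocks\<close>

definition polarization_term :: "real \<Rightarrow> real \<Rightarrow> nat \<Rightarrow> real" where
  "polarization_term p q c = (if c = 0 then (p + q) / 2 else if c = 1 then p else q)"

lemma polarization_identity:
  "2 * (polarization_term p q 0)\<^sup>2 - (polarization_term p q 1)\<^sup>2 / 2 - (polarization_term p q 2)\<^sup>2 / 2 = p * q"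
  by (simp add: polarization_term_def power2_eq_square field_simps)

lemma polarization_term_in_unit:
  "0 \<le> p \<Longrightarrow> p \<le> 1 \<Longrightarrow> 0 \<le> q \<Longrightarrow> q \<le> 1 \<Longrightarrow> 0 \<le> polarization_term p q c \<and> polarization_term p q c \<le> 1"
  by (auto simp: polarization_term_def)

text \<open>Layout of a hidden vector v of width w \<ge> n + 11 inside a multiplication block: v_j = z_j for
  j < n carries the factors; v_n - v_(n+1) is the running product p; for c < 3 the entries
  v_(n+2+3c), v_(n+3+3c), v_(n+4+3c) hold relu (g^s u_c), relu (g^s u_c - 1/2) and the s-th partial
  sawtooth sum for u_c^2, where g is the tent map and u_c the polarization terms of p and q.
  Since g y = 2 relu y - 4 relu (y - 1/2), a step layer reads g^(s+1) u_c off the first two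
  entries of a slot.\<close>

definition product_state :: "nat \<Rightarrow> nat \<Rightarrow> (nat \<Rightarrow> real) \<Rightarrow> real \<Rightarrow> real list \<Rightarrow> bool" where
  "product_state n w z p v \<longleftrightarrow> length v = w \<and> (\<forall>j<n. v ! j = z j) \<and> v ! n - v ! (n + 1) = p"

definition squaring_state ::
  "nat \<Rightarrow> nat \<Rightarrow> (nat \<Rightarrow> real) \<Rightarrow> (nat \<Rightarrow> real) \<Rightarrow> nat \<Rightarrow> real list \<Rightarrow> bool" where
  "squaring_state n w z u s v \<longleftrightarrow> length v = w \<and> (\<forall>j<n. v ! j = z j) \<and>
     (\<forall>c<3. v ! (n + 2 + 3 * c) = relu ((tent ^^ s) (u c))
          \<and> v ! (n + 3 + 3 * c) = relu ((tent ^^ s) (u c) - 1/2)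
          \<and> v ! (n + 4 + 3 * c) = u c - (\<Sum>t\<in>{1..s}. (tent ^^ t) (u c) / 4 ^ t))"

definition square_input_row :: "nat \<Rightarrow> nat \<Rightarrow> nat \<Rightarrow> (nat \<times> real) list" where
  "square_input_row n k c = (if c = 0 then [(n, 1/2), (n + 1, -1/2), (k, 1/2)]
     else if c = 1 then [(n, 1), (n + 1, -1)] else [(k, 1)])"

definition start_rows :: "nat \<Rightarrow> nat \<Rightarrow> nat \<Rightarrow> (nat \<times> real) list" where
  "start_rows n k i = (if i < n then [(i, 1)]
     else if n + 2 \<le> i \<and> i < n + 11 then square_input_row n k ((i - (n + 2)) div 3) else [])"

definition step_rows :: "nat \<Rightarrow> nat \<Rightarrow> nat \<Rightarrow> (nat \<times> real) list" where
  "step_rows n s i = (if i < n then [(i, 1)]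
     else if n + 2 \<le> i \<and> i < n + 11 then
       (let c = (i - (n + 2)) div 3 in
        if (i - (n + 2)) mod 3 = 2 then [(n + 2 + 3 * c, -2 / 4 ^ s), (n + 3 + 3 * c, 4 / 4 ^ s), (i, 1)]
        else [(n + 2 + 3 * c, 2), (n + 3 + 3 * c, -4)])
     else [])"

definition slot_bias :: "nat \<Rightarrow> nat \<Rightarrow> real" where
  "slot_bias n i = (if n + 2 \<le> i \<and> i < n + 11 \<and> (i - (n + 2)) mod 3 = 1 then -1/2 else 0)"

definition combine_rows :: "nat \<Rightarrow> nat \<Rightarrow> (nat \<times> real) list" where
  "combine_rows n i = (if i < n then [(i, 1)]
     else if i = n \<or> i = n + 1 then [(n + 4, 2), (n + 7, -1/2), (n + 10, -1/2)] else [])"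

text \<open>The bias -1 at entry n + 1 makes v_n - v_(n+1) = relu T - relu (T - 1), the clipping of T
  to [0, 1].\<close>

definition clip_bias :: "nat \<Rightarrow> nat \<Rightarrow> real" where
  "clip_bias n i = (if i = n + 1 then -1 else 0)"

lemma relu_copy_row:
  "j < length v \<Longrightarrow> 0 \<le> v ! j \<Longrightarrow> relu (sparse_dot [(j, 1)] v + 0) = v ! j"
  by (simp add: sparse_dot_def relu_of_nonneg)

lemma start_layer_correct:
  assumes "product_state n w z p v" "0 \<le> p" "p \<le> 1" "0 \<le> z k" "z k \<le> 1"
    and "\<forall>j<n. 0 \<le> z j" "k < n" "n + 11 \<le> w"
  shows "squaring_state n w z (polarization_term p (z k)) 0
           (map (\<lambda>i. relu (sparse_dot (start_rows n k i) v + slot_bias n i)) [0..<w])"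
proof -
  let ?u = "polarization_term p (z k)"
  let ?v = "map (\<lambda>i. relu (sparse_dot (start_rows n k i) v + slot_bias n i)) [0..<w]"
  have v: "length v = w" "\<forall>j<n. v ! j = z j" "v ! n - v ! (n + 1) = p"
    using assms(1) by (auto simp: product_state_def)
  have u: "0 \<le> ?u c" "?u c \<le> 1" for c
    using polarization_term_in_unit[OF assms(2-5)] by auto
  have input: "sparse_dot (square_input_row n k c) v = ?u c" if "c < 3" for c
  proof -
    have "c = 0 \<or> c = 1 \<or> c = 2" using that by linarith
    then show ?thesis using v assms(7,8)
      by (auto simp: sparse_dot_def square_input_row_def polarization_term_def)
  qed
  have "?v ! j = z j" if "j < n" for j
    using that v assms(6,8) relu_copy_row[of j v] by (simp add: start_rows_def slot_bias_def)
  moreover have "?v ! (n + 2 + 3 * c) = relu ((tent ^^ 0) (?u c))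
      \<and> ?v ! (n + 3 + 3 * c) = relu ((tent ^^ 0) (?u c) - 1/2)
      \<and> ?v ! (n + 4 + 3 * c) = ?u c - (\<Sum>t\<in>{1..0}. (tent ^^ t) (?u c) / 4 ^ t)" if "c < 3" for c
    using that assms(8) input[OF that] u[of c]
    by (simp add: start_rows_def slot_bias_def mod_Suc div_Suc relu_of_nonneg)
  ultimately show ?thesis by (simp add: squaring_state_def)
qed

lemma step_layer_correct:
  assumes "squaring_state n w z u s v" "\<forall>c<3. 0 \<le> u c \<and> u c \<le> 1" "\<forall>j<n. 0 \<le> z j" "n + 11 \<le> w"
  shows "squaring_state n w z u (Suc s)
           (map (\<lambda>i. relu (sparse_dot (step_rows n (Suc s) i) v + slot_bias n i)) [0..<w])"
proof -
  let ?v = "map (\<lambda>i. relu (sparse_dot (step_rows n (Suc s) i) v + slot_bias n i)) [0..<w]"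
  have v: "length v = w" "\<forall>j<n. v ! j = z j" using assms(1) by (auto simp: squaring_state_def)
  have "?v ! j = z j" if "j < n" for j
    using that v assms(3,4) relu_copy_row[of j v] by (simp add: step_rows_def slot_bias_def)
  moreover have "?v ! (n + 2 + 3 * c) = relu ((tent ^^ Suc s) (u c))
      \<and> ?v ! (n + 3 + 3 * c) = relu ((tent ^^ Suc s) (u c) - 1/2)
      \<and> ?v ! (n + 4 + 3 * c) = u c - (\<Sum>t\<in>{1..Suc s}. (tent ^^ t) (u c) / 4 ^ t)" if c: "c < 3" for c
  proof -
    define y where "y = (tent ^^ s) (u c)"
    define A where "A = u c - (\<Sum>t\<in>{1..s}. (tent ^^ t) (u c) / 4 ^ t)"
    have state: "v ! (n + 2 + 3 * c) = relu y" "v ! (n + 3 + 3 * c) = relu (y - 1/2)" "v ! (n + 4 + 3 * c) = A"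
      using assms(1) c by (auto simp: squaring_state_def y_def A_def)
    have tent_y: "(tent ^^ Suc s) (u c) = 2 * relu y - 4 * relu (y - 1/2)"
      by (simp add: y_def tent_def)
    have partial_sum: "u c - (\<Sum>t\<in>{1..Suc s}. (tent ^^ t) (u c) / 4 ^ t)
        = - 2 / 4 ^ Suc s * relu y + 4 / 4 ^ Suc s * relu (y - 1/2) + A"
    proof -
      have "(\<Sum>t\<in>{1..Suc s}. (tent ^^ t) (u c) / 4 ^ t)
          = (\<Sum>t\<in>{1..s}. (tent ^^ t) (u c) / 4 ^ t) + (tent ^^ Suc s) (u c) / 4 ^ Suc s"
        by (simp del: funpow.simps)
      then show ?thesis unfolding A_def by (simp add: tent_y field_simps del: funpow.simps)
    qed
    have "0 \<le> u c" "u c \<le> 1" using assms(2) c by auto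
    then have "0 \<le> u c - (\<Sum>t\<in>{1..Suc s}. (tent ^^ t) (u c) / 4 ^ t)"
      using square_sawtooth_bounds(1)[of "u c" "Suc s"] zero_le_power2[of "u c"] by linarith
    moreover have "step_rows n (Suc s) (n + 2 + 3 * c) = [(n + 2 + 3 * c, 2), (n + 3 + 3 * c, -4)]"
      "step_rows n (Suc s) (n + 3 + 3 * c) = [(n + 2 + 3 * c, 2), (n + 3 + 3 * c, -4)]"
      "step_rows n (Suc s) (n + 4 + 3 * c)
         = [(n + 2 + 3 * c, -2 / 4 ^ Suc s), (n + 3 + 3 * c, 4 / 4 ^ Suc s), (n + 4 + 3 * c, 1)]"
      "slot_bias n (n + 2 + 3 * c) = 0" "slot_bias n (n + 3 + 3 * c) = -1/2" "slot_bias n (n + 4 + 3 * c) = 0"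
      using c by (simp_all add: step_rows_def slot_bias_def Let_def mod_Suc div_Suc)
    ultimately show ?thesis
      using c assms(4) v(1) state unfolding partial_sum tent_y
      by (simp add: sparse_dot_def relu_of_nonneg)
  qed
  ultimately show ?thesis by (simp add: squaring_state_def)
qed

lemma step_layers_correct:
  assumes "squaring_state n w z u 0 v" "\<forall>c<3. 0 \<le> u c \<and> u c \<le> 1" "\<forall>j<n. 0 \<le> z j" "n + 11 \<le> w"
  shows "squaring_state n w z u m
           (hidden_eval (map (\<lambda>s. sparse_layer w w (step_rows n s) (slot_bias n)) [1..<m+1]) v)"
proof (induction m)
  case (Suc m)
  let ?h = "hidden_eval (map (\<lambda>s. sparse_layer w w (step_rows n s) (slot_bias n)) [1..<m+1]) v"
  have "length ?h = w" using Suc by (simp add: squaring_state_def)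
  then have "hidden_eval (map (\<lambda>s. sparse_layer w w (step_rows n s) (slot_bias n)) [1..<Suc m+1]) v
      = map (\<lambda>i. relu (sparse_dot (step_rows n (Suc m) i) ?h + slot_bias n i)) [0..<w]"
    by (simp add: hidden_eval_append hidden_eval_sparse_layer)
  then show ?case using step_layer_correct[OF Suc assms(2-4)] by simp
qed (use assms in simp)

lemma relu_clip: "relu t - relu (t - 1) = max 0 (min 1 t)"
  by (auto simp: relu_def)

lemma combine_layer_correct:
  assumes "squaring_state n w z (polarization_term p q) m v"
    and "0 \<le> p" "p \<le> 1" "0 \<le> q" "q \<le> 1" "\<forall>j<n. 0 \<le> z j" "n + 11 \<le> w"
  obtains p' where "product_state n w z p'
      (map (\<lambda>i. relu (sparse_dot (combine_rows n i) v + clip_bias n i)) [0..<w])"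
    and "0 \<le> p'" "p' \<le> 1" "\<bar>p' - p * q\<bar> \<le> 1 / 4 ^ m"
proof -
  let ?v = "map (\<lambda>i. relu (sparse_dot (combine_rows n i) v + clip_bias n i)) [0..<w]"
  let ?u = "polarization_term p q"
  define A where "A c = v ! (n + 4 + 3 * c)" for c
  have v: "length v = w" "\<forall>j<n. v ! j = z j" using assms(1) by (auto simp: squaring_state_def)
  have A: "(?u c)\<^sup>2 \<le> A c \<and> A c \<le> (?u c)\<^sup>2 + 1 / 4 ^ Suc m" if "c < 3" for c
    using assms(1) that square_sawtooth_bounds[of "?u c" m] polarization_term_in_unit[OF assms(2-5)]
    by (simp add: squaring_state_def A_def)
  define T where "T = 2 * A 0 - A 1 / 2 - A 2 / 2"
  have "\<bar>T - p * q\<bar> \<le> 2 / 4 ^ Suc m"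
    using A[of 0] A[of 1] A[of 2] polarization_identity[of p q] unfolding T_def by (simp add: abs_le_iff)
  also have "\<dots> \<le> 1 / 4 ^ m" by (simp add: divide_simps)
  finally have T: "\<bar>T - p * q\<bar> \<le> 1 / 4 ^ m" .
  have "?v ! n = relu T" "?v ! (n + 1) = relu (T - 1)"
    using assms(7) v(1) by (simp_all add: combine_rows_def clip_bias_def sparse_dot_def T_def A_def algebra_simps)
  moreover have "?v ! j = z j" if "j < n" for j
    using that v assms(6,7) relu_copy_row[of j v] by (simp add: combine_rows_def clip_bias_def)
  moreover have "0 \<le> p * q" "p * q \<le> 1" using assms(2-5) by (auto simp: mult_le_one)
  ultimately show ?thesis
    using that[of "max 0 (min 1 T)"] T by (auto simp: product_state_def relu_clip)
qed

definition mult_block :: "nat \<Rightarrow> nat \<Rightarrow> nat \<Rightarrow> nat \<Rightarrow> (real list list \<times> real list) list" where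
  "mult_block n w m k = sparse_layer w w (start_rows n k) (slot_bias n)
     # map (\<lambda>s. sparse_layer w w (step_rows n s) (slot_bias n)) [1..<m+1]
     @ [sparse_layer w w (combine_rows n) (clip_bias n)]"

lemma length_mult_block: "length (mult_block n w m k) = m + 2"
  by (simp add: mult_block_def)

lemma mult_block_correct:
  assumes "product_state n w z p v" "0 \<le> p" "p \<le> 1" "\<forall>j<n. 0 \<le> z j \<and> z j \<le> 1" "k < n" "n + 11 \<le> w"
  obtains p' where "product_state n w z p' (hidden_eval (mult_block n w m k) v)"
    and "0 \<le> p'" "p' \<le> 1" "\<bar>p' - p * z k\<bar> \<le> 1 / 4 ^ m"
proof -
  have z: "0 \<le> z k" "z k \<le> 1" "\<forall>j<n. 0 \<le> z j" using assms(4,5) by auto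
  have "length v = w" using assms(1) by (simp add: product_state_def)
  let ?v1 = "map (\<lambda>i. relu (sparse_dot (start_rows n k i) v + slot_bias n i)) [0..<w]"
  let ?v2 = "hidden_eval (map (\<lambda>s. sparse_layer w w (step_rows n s) (slot_bias n)) [1..<m+1]) ?v1"
  have "squaring_state n w z (polarization_term p (z k)) 0 ?v1"
    using start_layer_correct[OF assms(1-3) z assms(5,6)] .
  moreover have "\<forall>c<3. 0 \<le> polarization_term p (z k) c \<and> polarization_term p (z k) c \<le> 1"
    using polarization_term_in_unit[OF assms(2,3) z(1,2)] by blast
  ultimately have v2: "squaring_state n w z (polarization_term p (z k)) m ?v2"
    using step_layers_correct z(3) assms(6) by blast
  then have "length ?v2 = w" by (simp add: squaring_state_def)
  then have "hidden_eval (mult_block n w m k) v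
      = map (\<lambda>i. relu (sparse_dot (combine_rows n i) ?v2 + clip_bias n i)) [0..<w]"
    using \<open>length v = w\<close> by (simp add: mult_block_def hidden_eval_append hidden_eval_sparse_layer)
  then show ?thesis
    using combine_layer_correct[OF v2 assms(2,3) z assms(6)] that by metis
qed

lemma mult_blocks_correct:
  assumes "product_state n w z (z 0) v" "\<forall>j<n. 0 \<le> z j \<and> z j \<le> 1" "n + 11 \<le> w"
    and "1 \<le> k" "k \<le> n"
  shows "\<exists>p. product_state n w z p (hidden_eval (concat (map (mult_block n w m) [1..<k])) v)
      \<and> 0 \<le> p \<and> p \<le> 1 \<and> \<bar>p - (\<Prod>j<k. z j)\<bar> \<le> (real k - 1) / 4 ^ m"
  using assms(4,5)
proof (induction k rule: dec_induct)
  case base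
  then show ?case using assms(1,2) by auto
next
  case (step i)
  let ?h = "hidden_eval (concat (map (mult_block n w m) [1..<i])) v"
  obtain p where p: "product_state n w z p ?h" "0 \<le> p" "p \<le> 1" "\<bar>p - (\<Prod>j<i. z j)\<bar> \<le> (real i - 1) / 4 ^ m"
    using step by auto
  have "i < n" using step by simp
  then obtain p' where p': "product_state n w z p' (hidden_eval (mult_block n w m i) ?h)"
    "0 \<le> p'" "p' \<le> 1" "\<bar>p' - p * z i\<bar> \<le> 1 / 4 ^ m"
    by (rule mult_block_correct[OF p(1-3) assms(2) _ assms(3)])
  have z: "0 \<le> z i" "z i \<le> 1" using assms(2) step by auto
  have "\<bar>p' - (\<Prod>j<Suc i. z j)\<bar> = \<bar>(p' - p * z i) + (p - (\<Prod>j<i. z j)) * z i\<bar>"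
    by (simp add: algebra_simps)
  also have "\<dots> \<le> \<bar>p' - p * z i\<bar> + \<bar>p - (\<Prod>j<i. z j)\<bar> * z i"
    using z abs_triangle_ineq by (metis abs_mult abs_of_nonneg)
  also have "\<dots> \<le> 1 / 4 ^ m + (real i - 1) / 4 ^ m * 1"
    using p(4) p'(4) z by (intro add_mono mult_mono) auto
  finally show ?case
    using p' step by (auto simp: hidden_eval_append diff_divide_distrib add_divide_distrib)
qed

section \<open>Approximating monomials\<close>

definition input_rows :: "nat list \<Rightarrow> nat \<Rightarrow> (nat \<times> real) list" where
  "input_rows idx i = (let n = length idx in
     if i < n then [(idx ! i, 1)] else if i = n \<or> i = n + 1 then [(idx ! 0, 1)] else [])"

definition product_net :: "nat \<Rightarrow> nat \<Rightarrow> nat \<Rightarrow> nat list \<Rightarrow> (real list list \<times> real list) list" where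
  "product_net d w m idx = (let n = length idx in
     sparse_layer d w (input_rows idx) (clip_bias n)
     # concat (map (mult_block n w m) [1..<n])
     @ [sparse_layer w 1 (\<lambda>_. [(n, 1), (n + 1, -1)]) (\<lambda>_. 0)])"

lemma relu_fnn_product_net:
  "relu_fnn d w ((length idx - 1) * (m + 2) + 2) 7 (product_net d w m idx)"
proof -
  let ?n = "length idx"
  have "(\<Sum>(k, a)\<leftarrow>step_rows n s i. \<bar>a\<bar>) \<le> 7" for n s i
  proof -
    have "2 / 4 ^ s \<le> (2::real)" "4 / 4 ^ s \<le> (4::real)" by (simp_all add: divide_simps)
    then show ?thesis by (simp add: step_rows_def Let_def)
  qed
  then have "layer_ok w w M \<and> weights_bounded M 7" if "M \<in> set (mult_block n w m k)" for M n k
    using that unfolding mult_block_def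
    by (auto simp: layer_ok_sparse_layer intro!: weights_bounded_sparse_layer)
      (auto simp: start_rows_def square_input_row_def slot_bias_def combine_rows_def clip_bias_def)
  moreover have "weights_bounded (sparse_layer d w (input_rows idx) (clip_bias ?n)) 7"
    by (rule weights_bounded_sparse_layer) (auto simp: input_rows_def clip_bias_def Let_def)
  moreover have "weights_bounded (sparse_layer w 1 (\<lambda>_. [(?n, 1), (?n + 1, -1)]) (\<lambda>_. 0)) 7"
    by (rule weights_bounded_sparse_layer) auto
  ultimately have "relu_fnn d w (length (concat (map (mult_block ?n w m) [1..<?n])) + 2) 7 (product_net d w m idx)"
    unfolding product_net_def Let_def by (intro relu_fnn_intro) (auto simp: layer_ok_sparse_layer)
  moreover have "length (concat (map (mult_block ?n w m) [1..<?n])) = (?n - 1) * (m + 2)"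
    by (simp add: length_concat length_mult_block o_def sum_list_triv)
  ultimately show ?thesis by simp
qed

lemma input_layer_correct:
  assumes "length x = d" "idx \<noteq> []" "\<forall>i\<in>set idx. i < d \<and> 0 \<le> x ! i \<and> x ! i \<le> 1"
    and "length idx + 11 \<le> w"
  shows "product_state (length idx) w (\<lambda>j. x ! (idx ! j)) (x ! (idx ! 0))
           (map (\<lambda>i. relu (sparse_dot (input_rows idx i) x + clip_bias (length idx) i)) [0..<w])"
proof -
  let ?v = "map (\<lambda>i. relu (sparse_dot (input_rows idx i) x + clip_bias (length idx) i)) [0..<w]"
  have x: "idx ! j < length x" "0 \<le> x ! (idx ! j)" "x ! (idx ! j) \<le> 1" if "j < length idx" for j
    using assms(1,3) that nth_mem by blast+
  have "?v ! j = x ! (idx ! j)" if "j < length idx" for j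
    using that x[OF that] assms(4) by (simp add: input_rows_def clip_bias_def sparse_dot_def relu_of_nonneg)
  moreover have "?v ! length idx - ?v ! (length idx + 1) = x ! (idx ! 0)"
    using x[of 0] assms(2,4) by (simp add: input_rows_def clip_bias_def sparse_dot_def relu_def)
  ultimately show ?thesis by (simp add: product_state_def)
qed

lemma product_net_approx:
  assumes "length x = d" "idx \<noteq> []" "\<forall>i\<in>set idx. i < d \<and> 0 \<le> x ! i \<and> x ! i \<le> 1"
    and "length idx + 11 \<le> w"
  shows "\<bar>hd (net_eval (product_net d w m idx) x) - (\<Prod>j<length idx. x ! (idx ! j))\<bar>
      \<le> (real (length idx) - 1) / 4 ^ m"
proof -
  define n where "n = length idx"
  define z where "z = (\<lambda>j. x ! (idx ! j))"
  define mids where "mids = concat (map (mult_block n w m) [1..<n])"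
  define v0 where "v0 = map (\<lambda>i. relu (sparse_dot (input_rows idx i) x + clip_bias n i)) [0..<w]"
  have z: "\<forall>j<n. 0 \<le> z j \<and> z j \<le> 1" using assms(3) by (auto simp: z_def n_def)
  have "1 \<le> n" using assms(2) by (simp add: n_def Suc_le_eq)
  have "product_state n w z (z 0) v0"
    using input_layer_correct[OF assms] by (simp add: z_def n_def v0_def)
  then obtain p where p: "product_state n w z p (hidden_eval mids v0)" "\<bar>p - (\<Prod>j<n. z j)\<bar> \<le> (real n - 1) / 4 ^ m"
    using mult_blocks_correct[of n w z v0 n m] z assms(4) \<open>1 \<le> n\<close> unfolding mids_def n_def by auto
  define G where "G = sparse_layer w 1 (\<lambda>_. [(n, 1), (n + 1, -1)]) (\<lambda>_. 0)"
  have net: "product_net d w m idx = (sparse_layer d w (input_rows idx) (clip_bias n) # mids) @ [G]"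
    by (simp add: product_net_def mids_def n_def G_def Let_def)
  have "net_eval (product_net d w m idx) x = affine (fst G) (snd G) (hidden_eval mids v0)"
    unfolding net net_eval_append_last using assms(1) by (simp add: hidden_eval_sparse_layer v0_def)
  also have "\<dots> = [p]"
    using p(1) assms(4) by (simp add: G_def affine_sparse_layer sparse_dot_def product_state_def n_def)
  finally show ?thesis using p(2) by (simp add: z_def n_def)
qed

definition exponent_indices :: "nat list \<Rightarrow> nat list" where
  "exponent_indices \<alpha> = concat (map (\<lambda>i. replicate (\<alpha> ! i) i) [0..<length \<alpha>])"

lemma length_exponent_indices: "length (exponent_indices \<alpha>) = sum_list \<alpha>"
  by (simp add: exponent_indices_def length_concat o_def map_nth)

lemma set_exponent_indices: "set (exponent_indices \<alpha>) \<subseteq> {..<length \<alpha>}"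
  by (auto simp: exponent_indices_def)

lemma prod_exponent_indices:
  "(\<Prod>j<length (exponent_indices \<alpha>). x ! (exponent_indices \<alpha> ! j))
     = (\<Prod>i<length \<alpha>. x ! i ^ (\<alpha> ! i))" for x :: "'a::comm_monoid_mult list"
proof -
  have "(\<Prod>j<length (exponent_indices \<alpha>). x ! (exponent_indices \<alpha> ! j)) = (\<Prod>i\<leftarrow>exponent_indices \<alpha>. x ! i)"
    by (simp add: prod.list_conv_set_nth atLeast0LessThan)
  also have "\<dots> = (\<Prod>i\<leftarrow>[0..<length \<alpha>]. x ! i ^ (\<alpha> ! i))"
  proof -
    have "(\<Prod>i\<leftarrow>concat xss. f i) = (\<Prod>xs\<leftarrow>xss. \<Prod>i\<leftarrow>xs. f i)" for xss and f :: "nat \<Rightarrow> 'a"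
      by (induction xss) auto
    then show ?thesis by (simp add: exponent_indices_def o_def)
  qed
  also have "\<dots> = (\<Prod>i<length \<alpha>. x ! i ^ (\<alpha> ! i))"
    by (simp add: atLeast0LessThan prod.distinct_set_conv_list[symmetric])
  finally show ?thesis .
qed

lemma width_bound:
  assumes "2 \<le> n"
  shows "n + 11 \<le> 21 * 2 ^ (nat \<lceil>log 2 (real n)\<rceil> - 1)"
proof -
  define a where "a = nat \<lceil>log 2 (real n)\<rceil>"
  have "1 \<le> log 2 (real n)" using assms by simp
  then have "1 \<le> a" "log 2 (real n) \<le> real a" unfolding a_def by linarith+
  then have "real n \<le> 2 ^ a"
    using assms by (simp add: log_le_iff powr_realpow)
  then have "real n \<le> real (2 * 2 ^ (a - 1))"
    using \<open>1 \<le> a\<close> by (simp add: power_eq_if[of 2 a] split: if_splits)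
  then have "n \<le> 2 * 2 ^ (a - 1)" by (simp only: of_nat_le_iff)
  moreover have "1 \<le> (2::nat) ^ (a - 1)" by simp
  ultimately show ?thesis unfolding a_def[symmetric] by linarith
qed

lemma sawtooth_error_le:
  assumes "0 < \<epsilon>"
  shows "(real n - 1) / 4 ^ (nat \<lceil>ln (1 / \<epsilon>)\<rceil> + n) \<le> \<epsilon>"
proof -
  define k where "k = nat \<lceil>ln (1 / \<epsilon>)\<rceil>"
  have "1 / \<epsilon> = exp (ln (1 / \<epsilon>))" using assms by simp
  also have "\<dots> \<le> exp (real k)" unfolding exp_le_cancel_iff k_def by linarith
  also have "\<dots> = exp 1 ^ k" by (simp add: exp_of_nat_mult[symmetric])
  also have "\<dots> \<le> 4 ^ k" using exp_le by (intro power_mono) auto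
  finally have "1 \<le> \<epsilon> * 4 ^ k" using assms by (simp add: field_simps)
  then have "(4::real) ^ n \<le> 4 ^ n * (\<epsilon> * 4 ^ k)"
    using mult_left_mono[of 1 "\<epsilon> * 4 ^ k" "4 ^ n :: real"] by simp
  moreover have "real n - 1 \<le> 4 ^ n"
  proof -
    have "real n \<le> 2 ^ n" using less_exp[of n] by (simp add: order_less_imp_le)
    also have "\<dots> \<le> 4 ^ n" by (intro power_mono) auto
    finally show ?thesis by linarith
  qed
  ultimately have "real n - 1 \<le> 4 ^ n * (\<epsilon> * 4 ^ k)" by linarith
  then have "real n - 1 \<le> \<epsilon> * 4 ^ (k + n)"
    by (simp add: power_add mult_ac)
  then show ?thesis unfolding k_def[symmetric] by (simp add: divide_le_eq)
qed

lemma sawtooth_depth_le: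
  assumes "0 < \<epsilon>" "1 \<le> R" "1 \<le> n"
  shows "real ((n - 1) * (nat \<lceil>ln (1 / \<epsilon>)\<rceil> + n + 2) + 2) \<le> (real n + 4)\<^sup>2 * max 1 (ln (R / \<epsilon>))"
proof -
  define M where "M = max 1 (ln (R / \<epsilon>))"
  have "ln (1 / \<epsilon>) \<le> ln (R / \<epsilon>)" using assms(1,2) by (simp add: divide_right_mono)
  then have k: "real (nat \<lceil>ln (1 / \<epsilon>)\<rceil>) \<le> M + 1" unfolding M_def by linarith
  have "1 \<le> M" by (simp add: M_def)
  have "real ((n - 1) * (nat \<lceil>ln (1 / \<epsilon>)\<rceil> + n + 2) + 2)
      = (real n - 1) * (real (nat \<lceil>ln (1 / \<epsilon>)\<rceil>) + real n + 2) + 2"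
    using assms(3) by (simp add: of_nat_diff) (simp add: algebra_simps)
  also have "\<dots> \<le> (real n - 1) * (M + real n + 3) + 2"
    using k assms(3) by (intro add_right_mono mult_left_mono) auto
  also have "\<dots> \<le> (real n - 1) * ((real n + 4) * M) + 2 * M"
    using \<open>1 \<le> M\<close> assms(3) mult_left_mono[OF \<open>1 \<le> M\<close>, of "real n + 3"]
    by (intro add_mono mult_left_mono) (auto simp: algebra_simps)
  also have "\<dots> \<le> (real n + 4)\<^sup>2 * M"
    using \<open>1 \<le> M\<close> by (simp add: power2_eq_square algebra_simps)
  finally show ?thesis unfolding M_def .
qed

lemma monomial_approx_network:
  assumes "2 \<le> sum_list \<alpha>" "sum_list \<alpha> + 11 \<le> w" "0 < \<epsilon>" "1 \<le> R"
  shows "\<exists>N L. relu_fnn (length \<alpha>) w L ((real (sum_list \<alpha>) + 4)\<^sup>2) N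
      \<and> real L \<le> (real (sum_list \<alpha>) + 4)\<^sup>2 * max 1 (ln (R / \<epsilon>))
      \<and> (\<forall>x. length x = length \<alpha> \<and> (\<forall>i<length \<alpha>. 0 \<le> x ! i \<and> x ! i \<le> 1) \<longrightarrow>
            \<bar>hd (net_eval N x) - (\<Prod>i<length \<alpha>. x ! i ^ (\<alpha> ! i))\<bar> \<le> \<epsilon>)"
proof (intro exI conjI allI impI)
  define n where "n = sum_list \<alpha>"
  define idx where "idx = exponent_indices \<alpha>"
  define m where "m = nat \<lceil>ln (1 / \<epsilon>)\<rceil> + n"
  have "2 \<le> n" using assms(1) by (simp add: n_def)
  have idx: "length idx = n" "set idx \<subseteq> {..<length \<alpha>}"
    by (simp_all add: idx_def n_def length_exponent_indices set_exponent_indices)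
  have "(6::real)\<^sup>2 \<le> (real n + 4)\<^sup>2" using \<open>2 \<le> n\<close> by (intro power_mono) auto
  then have "relu_fnn (length \<alpha>) w ((n - 1) * (m + 2) + 2) ((real n + 4)\<^sup>2) (product_net (length \<alpha>) w m idx)"
    using relu_fnn_mono[OF relu_fnn_product_net[where idx = idx and m = m]] idx(1) by simp
  then show "relu_fnn (length \<alpha>) w ((n - 1) * (m + 2) + 2) ((real (sum_list \<alpha>) + 4)\<^sup>2)
      (product_net (length \<alpha>) w m idx)" by (simp add: n_def)
  show "real ((n - 1) * (m + 2) + 2) \<le> (real (sum_list \<alpha>) + 4)\<^sup>2 * max 1 (ln (R / \<epsilon>))"
    using sawtooth_depth_le[OF assms(3,4), of n] \<open>2 \<le> n\<close>
    by (simp add: m_def n_def add.assoc mult.commute)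
  fix x :: "real list"
  assume "length x = length \<alpha> \<and> (\<forall>i<length \<alpha>. 0 \<le> x ! i \<and> x ! i \<le> 1)"
  then show "\<bar>hd (net_eval (product_net (length \<alpha>) w m idx) x) - (\<Prod>i<length \<alpha>. x ! i ^ (\<alpha> ! i))\<bar> \<le> \<epsilon>"
    using product_net_approx[of x "length \<alpha>" idx w m] idx \<open>2 \<le> n\<close> assms(2)
      prod_exponent_indices[where \<alpha> = \<alpha> and x = x] sawtooth_error_le[OF assms(3), of n]
    by (force simp: idx_def m_def n_def)
qed

theorem lemma9:
  fixes \<alpha> :: "nat list"
  assumes "length \<alpha> \<ge> 1"
    and "sum_list \<alpha> \<ge> 2"
  shows "\<exists>C>0. \<forall>\<epsilon>::real.
     (let d = length \<alpha>; a = nat \<lceil>log 2 (real (sum_list \<alpha>))\<rceil> in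
       0 < \<epsilon> \<and> (a = 1 \<or> \<epsilon> \<le> (3 ^ a - 1) / (3 ^ (a - 1) - 1)) \<longrightarrow>
       (\<exists>N L. relu_fnn d (21 * 2 ^ (a - 1)) L C N
           \<and> real L \<le> C * max 1 (ln ((3 ^ a - 1) / (2 * \<epsilon>)))
           \<and> (\<forall>x. length x = d \<and> (\<forall>i<d. 0 \<le> x ! i \<and> x ! i \<le> 1) \<longrightarrow>
                 \<bar>hd (net_eval N x) - (\<Prod>i<d. (x ! i) ^ (\<alpha> ! i))\<bar> \<le> \<epsilon>)))"
proof -
  define a where "a = nat \<lceil>log 2 (real (sum_list \<alpha>))\<rceil>"
  have "1 \<le> log 2 (real (sum_list \<alpha>))" using assms(2) by simp
  then have "1 \<le> a" unfolding a_def by linarith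
  then have R: "1 \<le> ((3::real) ^ a - 1) / 2" using power_increasing[of 1 a "3::real"] by simp
  have width: "sum_list \<alpha> + 11 \<le> 21 * 2 ^ (a - 1)" using width_bound[OF assms(2)] by (simp add: a_def)
  show ?thesis
    unfolding Let_def a_def[symmetric]
    using monomial_approx_network[OF assms(2) width _ R]
    by (intro exI[of _ "(real (sum_list \<alpha>) + 4)\<^sup>2"] conjI allI impI) (auto simp: divide_divide_eq_left)
qed

end
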